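(* Assume $\langle f\rangle_X=0$, $N/p\in\mathbb N$, and that $\psi$ satisfies (A1) and (A2). Then there exist constants $C_1,C_2$, depending only on $c_\psi,C_\psi,C'_\psi$ and $p$ (in particular independent of $\epsilon$ and $f$), such that \[ |u^{\rm c}-u|_{H^1}\le \epsilon\, C_1\|f\|_{L^2},\qquad |\langle u^{\rm c}\rangle_X|\le \epsilon^2 C_2\|f\|_{L^2}, \] where $u$ is the solution of the atomistic problem, $u^0$ the solution of the homogenized problem, and $u^{\rm c}$ the corrector.
   Context: Let $\epsilon>0$ and $N,p$ be positive integers, with the normalization $N\epsilon=1$. Set $X_i=\epsilon i$ ($i\in\mathbb Z$) and $Y_j=j$ ($j\in\mathbb Z$). $U^N_{\rm per}(\epsilon\mathbb Z)$ is the space of functions $u:\epsilon\mathbb Z\to\mathbb R$ with $u(X_{i+N})=u(X_i)$ for all $i$, and $U^N_\#(\epsilon\mathbb Z)$ is the subspace with $\langle u\rangle_X:=\frac1N\sum_{i=1}^N u(X_i)=0$. For $u,v\in U^N_{\rm per}(\epsilon\mathbb Z)$: $\langle u,v\rangle_X=\frac1N\sum_{i=1}^N u(X_i)v(X_i)$, $Du(X_i)=(u(X_{i+1})-u(X_i))/\epsilon$, $\|u\|_{L^q}=(\frac1N\sum_{i=1}^N|u(X_i)|^q)^{1/q}$, $|u|_{H^1}=\|Du\|_{L^2}$. A two-scale function is $g:\epsilon\mathbb Z\times\mathbb Z\to\mathbb R$ with $g(X_{i+N},Y_j)=g(X_i,Y_j)=g(X_i,Y_{j+p})$; set $D_Xg(X_i,Y_j)=(g(X_{i+1},Y_j)-g(X_i,Y_j))/\epsilon$,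 $D_Yg(X_i,Y_j)=g(X_i,Y_{j+1})-g(X_i,Y_j)$, $\langle g\rangle_Y(X_i)=\frac1p\sum_{j=1}^p g(X_i,Y_j)$, $\|g\|_{L^\infty(N,p)}=\max_{1\le i\le N,1\le j\le p}|g(X_i,Y_j)|$. $\psi$ is a two-scale function satisfying (A1) $0<c_\psi\le\psi(X_i,Y_j)\le C_\psi$ for all $i,j$, and (A2) $\|D_X\psi\|_{L^\infty(N,p)}\le C'_\psi$. Define $\psi^\epsilon(X_i)=\psi(X_i,X_i/\epsilon)$ and the homogenized tensor $\psi^0(X_i)=\langle 1/\psi(X_i,\cdot)\rangle_Y^{-1}$. The cell solution $\chi$ is the two-scale function with $\langle\chi(X_i,\cdot)\rangle_Y=0$ for all $i$ and $-D_Y(\psi D_Y\chi)=D_Y\psi$ at every $(X_i,Y_j)$. $f\in U^N_{\rm per}(\epsilon\mathbb Z)$. The atomistic problem: $u\in U^N_\#(\epsilon\mathbb Z)$ with $\langle\psi^\epsilon Du,Dv\rangle_X=\langle f,v\rangle_X$ for all $v\in U^N_{\rm per}(\epsilon\mathbb Z)$. The homogenized problem: $u^0\in U^N_\#(\epsilon\mathbb Z)$ with $\langle\psi^0Du^0,Dv\rangle_X=\langle f,v\rangle_X$ for all $v\in U^N_{\rm per}(\epsilon\mathbb Z)$. The corrector is $u^{\rm c}(X_i)=u^0(X_i)+\epsilon\,\chi(X_i,X_i/\epsilon)\,Du^0(X_i)$. *)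

theory Defs
  imports Complex_Main
begin

text \<open>Lattice functions on eps Z are represented by their index: u i stands for u(X_i),
  X_i = eps * i with eps = 1/N. Two-scale functions g i j stand for g(X_i, Y_j), Y_j = j.\<close>

definition per :: "nat \<Rightarrow> (int \<Rightarrow> real) \<Rightarrow> bool" where
  "per N u \<longleftrightarrow> (\<forall>i. u (i + int N) = u i)"

definition per2 :: "nat \<Rightarrow> nat \<Rightarrow> (int \<Rightarrow> int \<Rightarrow> real) \<Rightarrow> bool" where
  "per2 N p g \<longleftrightarrow> (\<forall>i j. g (i + int N) j = g i j \<and> g i (j + int p) = g i j)"

definition avgX :: "nat \<Rightarrow> (int \<Rightarrow> real) \<Rightarrow> real" where
  "avgX N u = (1 / real N) * (\<Sum>i = 1..int N. u i)"

definition ipX :: "nat \<Rightarrow> (int \<Rightarrow> real) \<Rightarrow> (int \<Rightarrow> real) \<Rightarrow> real" where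
  "ipX N u v = avgX N (\<lambda>i. u i * v i)"

definition Dd :: "real \<Rightarrow> (int \<Rightarrow> real) \<Rightarrow> int \<Rightarrow> real" where
  "Dd eps u i = (u (i + 1) - u i) / eps"

definition normL2 :: "nat \<Rightarrow> (int \<Rightarrow> real) \<Rightarrow> real" where
  "normL2 N u = sqrt (avgX N (\<lambda>i. (u i)\<^sup>2))"

definition semiH1 :: "nat \<Rightarrow> real \<Rightarrow> (int \<Rightarrow> real) \<Rightarrow> real" where
  "semiH1 N eps u = normL2 N (Dd eps u)"

definition DX :: "real \<Rightarrow> (int \<Rightarrow> int \<Rightarrow> real) \<Rightarrow> int \<Rightarrow> int \<Rightarrow> real" where
  "DX eps g i j = (g (i + 1) j - g i j) / eps"

definition DY :: "(int \<Rightarrow> int \<Rightarrow> real) \<Rightarrow> int \<Rightarrow> int \<Rightarrow> real" where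
  "DY g i j = g i (j + 1) - g i j"

definition avgY :: "nat \<Rightarrow> (int \<Rightarrow> real) \<Rightarrow> real" where
  "avgY p h = (1 / real p) * (\<Sum>j = 1..int p. h j)"

definition normLinf2 :: "nat \<Rightarrow> nat \<Rightarrow> (int \<Rightarrow> int \<Rightarrow> real) \<Rightarrow> real" where
  "normLinf2 N p g = Max ((\<lambda>(i, j). \<bar>g i j\<bar>) ` ({1..int N} \<times> {1..int p}))"

text \<open>psi^eps(X_i) = psi(X_i, X_i/eps) = psi(X_i, Y_i).\<close>
definition oscil :: "(int \<Rightarrow> int \<Rightarrow> real) \<Rightarrow> int \<Rightarrow> real" where
  "oscil g i = g i i"

definition psi_hom :: "nat \<Rightarrow> (int \<Rightarrow> int \<Rightarrow> real) \<Rightarrow> int \<Rightarrow> real" where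
  "psi_hom p psi i = 1 / avgY p (\<lambda>j. 1 / psi i j)"

definition cell_solution :: "nat \<Rightarrow> nat \<Rightarrow> (int \<Rightarrow> int \<Rightarrow> real) \<Rightarrow> (int \<Rightarrow> int \<Rightarrow> real) \<Rightarrow> bool" where
  "cell_solution N p psi chi \<longleftrightarrow> per2 N p chi \<and> (\<forall>i. avgY p (chi i) = 0) \<and>
     (\<forall>i j. - DY (\<lambda>i' j'. psi i' j' * DY chi i' j') i j = DY psi i j)"

definition weak_sol :: "nat \<Rightarrow> (int \<Rightarrow> real) \<Rightarrow> (int \<Rightarrow> real) \<Rightarrow> (int \<Rightarrow> real) \<Rightarrow> bool" where
  "weak_sol N a f u \<longleftrightarrow> per N u \<and> avgX N u = 0 \<and>
     (\<forall>v. per N v \<longrightarrow> ipX N (\<lambda>i. a i * Dd (1 / real N) u i) (Dd (1 / real N) v) = ipX N f v)"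

definition corrector :: "nat \<Rightarrow> (int \<Rightarrow> int \<Rightarrow> real) \<Rightarrow> (int \<Rightarrow> real) \<Rightarrow> int \<Rightarrow> real" where
  "corrector N chi u0 i = u0 i + (1 / real N) * chi i i * Dd (1 / real N) u0 i"

end

theory Submission
  imports Defs "HOL-Analysis.Convex"
begin

text \<open>In one dimension the discrete equations integrate once: the fluxes psi^eps Du and
  psi0 Du0 both drop by f/N per site, so they differ by a constant, the flux gap. The cell
  problem is solved explicitly, 1 + D_Y chi = psi0/psi, hence Du = Du0 (1 + D_Y chi) + gap/psi^eps
  and the order-one part of D(u^c - u) cancels; the rest is the slow variation of chi and Du0,
  which is O(eps). The flux gap and the mean of u^c are sums of slowly varying quantities
  against p-periodic functions of zero mean, and grouping the N = q p sites into periods shows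
  that such sums gain a factor eps. Everything is measured through the flux, which is bounded
  by the discrete L1 norm of f, hence by its L2 norm.\<close>

section \<open>Periodic sums on the integers\<close>

lemma sum_atLeastAtMost_1_int: "(\<Sum>i = 1..int N. F i) = (\<Sum>k<N. F (1 + int k))"
  by (rule sum.reindex_bij_witness[of _ "\<lambda>k. 1 + int k" "\<lambda>i. nat (i - 1)"]) auto

lemma sum_shift_periodic:
  fixes h :: "int \<Rightarrow> 'a::ab_group_add"
  assumes per: "\<And>j. h (j + int n) = h j"
  shows "(\<Sum>r<n. h (b + int r)) = (\<Sum>r<n. h (a + int r))"
proof -
  have step: "(\<Sum>r<n. h (x + 1 + int r)) = (\<Sum>r<n. h (x + int r))" for x
  proof -
    have "(\<Sum>r<n. h (x + 1 + int r)) - (\<Sum>r<n. h (x + int r)) = h (x + int n) - h x"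
      using sum_lessThan_telescope[of "\<lambda>r. h (x + int r)" n] by (simp add: sum_subtractf add_ac)
    then show ?thesis using per[of x] by simp
  qed
  show ?thesis
  proof (induction b rule: int_induct[where k=a])
    case (step1 i) then show ?case using step[of i] by simp
  next
    case (step2 i) then show ?case using step[of "i - 1"] by simp
  qed simp
qed

lemma periodic_add_mult:
  assumes per: "\<And>x. h (x + int n) = h x"
  shows "h (x + k * int n) = h x"
proof (induction k rule: int_induct[where k=0])
  case (step1 k)
  then show ?case using per[of "x + k * int n"] by (simp add: algebra_simps)
next
  case (step2 k)
  then show ?case using per[of "x + (k - 1) * int n"] by (simp add: algebra_simps)
qed simp

lemma periodic_representative:
  assumes per: "\<And>x. h (x + int n) = h x" and "0 < n"
  obtains x' where "x' \<in> {1..int n}" "h x = h x'"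
proof
  let ?x' = "(x - 1) mod int n + 1"
  have "x = ?x' + ((x - 1) div int n) * int n" by simp
  then show "h x = h ?x'" using periodic_add_mult[where h=h, OF per] by metis
  show "?x' \<in> {1..int n}" using \<open>0 < n\<close> by (simp add: pos_mod_bound add1_zle_eq)
qed

lemma abs_diff_le_sum_steps:
  fixes g :: "int \<Rightarrow> real"
  shows "\<bar>g (a + int r) - g a\<bar> \<le> (\<Sum>k<r. \<bar>g (a + int k + 1) - g (a + int k)\<bar>)"
proof -
  have "g (a + int r) - g a = (\<Sum>k<r. g (a + int k + 1) - g (a + int k))"
    using sum_lessThan_telescope[of "\<lambda>k. g (a + int k)" r] by (simp add: add_ac)
  then show ?thesis by (simp only: sum_abs)
qed

lemma abs_diff_le_of_steps:
  fixes g :: "int \<Rightarrow> real"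
  assumes "\<And>j. \<bar>g (j + 1) - g j\<bar> \<le> d"
  shows "\<bar>g (a + int r) - g a\<bar> \<le> real r * d"
proof -
  have "\<bar>g (a + int r) - g a\<bar> \<le> (\<Sum>k<r. \<bar>g (a + int k + 1) - g (a + int k)\<bar>)"
    by (rule abs_diff_le_sum_steps)
  also have "\<dots> \<le> (\<Sum>k<r. d)" by (rule sum_mono) (rule assms)
  finally show ?thesis by simp
qed

lemma abs_le_of_weighted_sum_eq_0:
  fixes q h :: "nat \<Rightarrow> real"
  assumes "0 < n" and q_pos: "\<And>r. r < n \<Longrightarrow> 0 < q r" and "(\<Sum>r<n. q r * h r) = 0"
    and dev: "\<And>r. r < n \<Longrightarrow> \<bar>h r - h 0\<bar> \<le> B"
  shows "\<bar>h 0\<bar> \<le> B"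
proof -
  have Q: "0 < (\<Sum>r<n. q r)" using assms(1) q_pos by (intro sum_pos) auto
  have "h 0 * (\<Sum>r<n. q r) = (\<Sum>r<n. q r * (h 0 - h r))"
    using assms(3) by (simp add: sum_distrib_left sum_subtractf algebra_simps)
  then have "\<bar>h 0\<bar> * (\<Sum>r<n. q r) = \<bar>\<Sum>r<n. q r * (h 0 - h r)\<bar>"
    using Q by (metis abs_mult abs_of_pos)
  also have "\<dots> \<le> (\<Sum>r<n. \<bar>q r * (h 0 - h r)\<bar>)" by (rule sum_abs)
  also have "\<dots> \<le> (\<Sum>r<n. q r * B)"
  proof (rule sum_mono)
    fix r assume "r \<in> {..<n}"
    then show "\<bar>q r * (h 0 - h r)\<bar> \<le> q r * B"
      using q_pos[of r] dev[of r] by (simp add: abs_mult abs_minus_commute mult_left_mono)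
  qed
  also have "\<dots> = B * (\<Sum>r<n. q r)" by (simp add: sum_distrib_left mult.commute)
  finally show ?thesis using Q by simp
qed

lemma periodic_zero_sum_abs_le:
  fixes h :: "int \<Rightarrow> real"
  assumes "0 < p" and per: "\<And>j. h (j + int p) = h j" and "(\<Sum>r<p. h (1 + int r)) = 0"
    and step: "\<And>j. \<bar>h (j + 1) - h j\<bar> \<le> d"
  shows "\<bar>h j\<bar> \<le> real p * d"
proof -
  have "(\<Sum>r<p. 1 * h (j + int r)) = 0"
    using sum_shift_periodic[where h=h, OF per, of j 1] assms(3) by simp
  moreover have "\<bar>h (j + int r) - h (j + int 0)\<bar> \<le> real p * d" if "r < p" for r
  proof -
    have "0 \<le> d" using step[of 0] by linarith
    then have "real r * d \<le> real p * d" using that by (simp add: mult_right_mono)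
    then show ?thesis using abs_diff_le_of_steps[where g=h, OF step, of j r] by simp
  qed
  ultimately show ?thesis
    using abs_le_of_weighted_sum_eq_0[of p "\<lambda>_. 1" "\<lambda>r. h (j + int r)"] \<open>0 < p\<close> by simp
qed

lemma sum_lessThan_mult_blocks:
  fixes F :: "nat \<Rightarrow> 'a::comm_monoid_add"
  shows "(\<Sum>k<q * p. F k) = (\<Sum>m<q. \<Sum>r<p. F (m * p + r))"
proof -
  have "sum F {m * p..<m * p + p} = (\<Sum>r<p. F (m * p + r))" for m
    using sum.shift_bounds_nat_ivl[of F 0 "m * p" p] by (simp add: atLeast0LessThan add.commute)
  then show ?thesis by (simp flip: sum.nat_group)
qed

section \<open>Oscillating sums\<close>

text \<open>Freezing the slow variable of w at the start b of the period leaves a sum of zero; the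
  error is controlled by the slow Lipschitz constant \<delta> of w and the variation of s.\<close>
lemma oscillating_sum_period:
  fixes w :: "int \<Rightarrow> int \<Rightarrow> real" and s :: "int \<Rightarrow> real"
  assumes per: "\<And>i j. w i (j + int p) = w i j" and zero_sum: "\<And>i. (\<Sum>r<p. w i (1 + int r)) = 0"
    and w_bound: "\<And>i j. \<bar>w i j\<bar> \<le> W" and w_step: "\<And>i j. \<bar>w (i + 1) j - w i j\<bar> \<le> \<delta>"
    and s_bound: "\<And>i. \<bar>s i\<bar> \<le> S"
  shows "\<bar>\<Sum>r<p. s (b + int r) * w (b + int r) (b + int r)\<bar>
     \<le> real p * real p * S * \<delta> + real p * W * (\<Sum>k<p. \<bar>s (b + int k + 1) - s (b + int k)\<bar>)"
proof -
  define V where "V = (\<Sum>k<p. \<bar>s (b + int k + 1) - s (b + int k)\<bar>)"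
  have "0 \<le> S" "0 \<le> W" "0 \<le> \<delta>" using s_bound[of 0] w_bound[of 0 0] w_step[of 0 0] by linarith+
  have split: "(\<Sum>r<p. s (b + int r) * w (b + int r) (b + int r)) =
     (\<Sum>r<p. s (b + int r) * (w (b + int r) (b + int r) - w b (b + int r)))
     + (\<Sum>r<p. (s (b + int r) - s b) * w b (b + int r)) + s b * (\<Sum>r<p. w b (b + int r))"
    by (simp add: algebra_simps sum.distrib sum_distrib_left sum_subtractf)
  have frozen: "(\<Sum>r<p. w b (b + int r)) = 0"
    using sum_shift_periodic[where h="w b", OF per, of b 1] zero_sum[of b] by simp
  have slow: "\<bar>\<Sum>r<p. s (b + int r) * (w (b + int r) (b + int r) - w b (b + int r))\<bar>
      \<le> real p * real p * S * \<delta>"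
  proof -
    have term_bound: "\<bar>s (b + int r) * (w (b + int r) (b + int r) - w b (b + int r))\<bar>
        \<le> S * (real p * \<delta>)" if "r < p" for r
    proof -
      have "\<bar>w (b + int r) (b + int r) - w b (b + int r)\<bar> \<le> real r * \<delta>"
        by (rule abs_diff_le_of_steps[where g="\<lambda>i. w i (b + int r)", OF w_step])
      also have "\<dots> \<le> real p * \<delta>" using that \<open>0 \<le> \<delta>\<close> by (intro mult_right_mono) auto
      finally show ?thesis
        unfolding abs_mult using s_bound \<open>0 \<le> S\<close> by (intro mult_mono) auto
    qed
    have "\<bar>\<Sum>r<p. s (b + int r) * (w (b + int r) (b + int r) - w b (b + int r))\<bar>
        \<le> (\<Sum>r<p. \<bar>s (b + int r) * (w (b + int r) (b + int r) - w b (b + int r))\<bar>)"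
      by (rule sum_abs)
    also have "\<dots> \<le> (\<Sum>r<p. S * (real p * \<delta>))" using term_bound by (intro sum_mono) auto
    finally show ?thesis by (simp add: mult_ac)
  qed
  have fast: "\<bar>\<Sum>r<p. (s (b + int r) - s b) * w b (b + int r)\<bar> \<le> real p * W * V"
  proof -
    have term_bound: "\<bar>(s (b + int r) - s b) * w b (b + int r)\<bar> \<le> V * W" if "r < p" for r
    proof -
      have "\<bar>s (b + int r) - s b\<bar> \<le> (\<Sum>k<r. \<bar>s (b + int k + 1) - s (b + int k)\<bar>)"
        by (rule abs_diff_le_sum_steps)
      also have "\<dots> \<le> V" unfolding V_def using that by (intro sum_mono2) auto
      finally show ?thesis unfolding abs_mult using w_bound by (intro mult_mono) auto
    qed
    have "\<bar>\<Sum>r<p. (s (b + int r) - s b) * w b (b + int r)\<bar>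
        \<le> (\<Sum>r<p. \<bar>(s (b + int r) - s b) * w b (b + int r)\<bar>)"
      by (rule sum_abs)
    also have "\<dots> \<le> (\<Sum>r<p. V * W)" using term_bound by (intro sum_mono) auto
    finally show ?thesis by (simp add: mult_ac)
  qed
  show ?thesis unfolding split frozen V_def[symmetric] using slow fast by simp
qed

lemma oscillating_sum:
  fixes w :: "int \<Rightarrow> int \<Rightarrow> real" and s :: "int \<Rightarrow> real"
  assumes "N = q * p"
    and per: "\<And>i j. w i (j + int p) = w i j" and zero_sum: "\<And>i. (\<Sum>r<p. w i (1 + int r)) = 0"
    and w_bound: "\<And>i j. \<bar>w i j\<bar> \<le> W" and w_step: "\<And>i j. \<bar>w (i + 1) j - w i j\<bar> \<le> \<delta>"
    and s_bound: "\<And>i. \<bar>s i\<bar> \<le> S"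
  shows "\<bar>\<Sum>k<N. s (1 + int k) * w (1 + int k) (1 + int k)\<bar>
     \<le> real N * real p * S * \<delta> + real p * W * (\<Sum>k<N. \<bar>s (int k + 2) - s (int k + 1)\<bar>)"
proof -
  define F where "F k = s (1 + int k) * w (1 + int k) (1 + int k)" for k
  define G where "G k = \<bar>s (int k + 2) - s (int k + 1)\<bar>" for k
  have block: "\<bar>\<Sum>r<p. F (m * p + r)\<bar> \<le> real p * real p * S * \<delta> + real p * W * (\<Sum>r<p. G (m * p + r))"
    for m
    using oscillating_sum_period[where w=w and s=s, OF per zero_sum w_bound w_step s_bound, of "1 + int (m * p)"]
    by (simp add: F_def G_def add_ac)
  have "\<bar>\<Sum>k<N. F k\<bar> \<le> (\<Sum>m<q. \<bar>\<Sum>r<p. F (m * p + r)\<bar>)"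
    unfolding \<open>N = q * p\<close> sum_lessThan_mult_blocks by (rule sum_abs)
  also have "\<dots> \<le> (\<Sum>m<q. real p * real p * S * \<delta> + real p * W * (\<Sum>r<p. G (m * p + r)))"
    by (intro sum_mono block)
  also have "\<dots> = real N * real p * S * \<delta> + real p * W * (\<Sum>k<N. G k)"
    unfolding \<open>N = q * p\<close> sum_lessThan_mult_blocks by (simp add: sum.distrib sum_distrib_left)
  finally show ?thesis by (simp add: F_def G_def)
qed

section \<open>Discrete weak solutions in one dimension\<close>

lemma sum_Dd_periodic:
  assumes "per N u"
  shows "(\<Sum>k<N. Dd e u (i + int k)) = 0"
proof -
  have "(\<Sum>k<N. u (i + 1 + int k)) = (\<Sum>k<N. u (i + int k))"
    by (rule sum_shift_periodic) (use assms in \<open>simp add: per_def\<close>)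
  then show ?thesis
    by (simp add: Dd_def sum_divide_distrib[symmetric] sum_subtractf add_ac)
qed

lemma per_Dd:
  assumes "per N u"
  shows "per N (Dd e u)"
proof -
  have "u (i + int N + 1) = u (i + 1)" for i
    using assms unfolding per_def by (metis add.assoc add.commute)
  with assms show ?thesis by (simp add: per_def Dd_def)
qed

lemma summation_by_parts_periodic:
  fixes \<sigma> v :: "int \<Rightarrow> real"
  assumes "per N \<sigma>" "per N v"
  shows "(\<Sum>k<N. \<sigma> (1 + int k) * (v (2 + int k) - v (1 + int k)))
       = (\<Sum>k<N. (\<sigma> (int k) - \<sigma> (1 + int k)) * v (1 + int k))"
proof -
  define h where "h x = \<sigma> (x - 1) * v x" for x
  have "(\<Sum>k<N. h (2 + int k)) = (\<Sum>k<N. h (1 + int k))"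
    by (rule sum_shift_periodic) (use assms in \<open>simp add: h_def per_def diff_add_eq[symmetric]\<close>)
  then show ?thesis by (simp add: h_def algebra_simps sum_subtractf)
qed

lemma periodic_eq_0:
  assumes "per N v" "0 < N" and zero: "\<And>k. k < N \<Longrightarrow> v (1 + int k) = 0"
  shows "v i = 0"
proof -
  obtain i' where i': "i' \<in> {1..int N}" "v i = v i'"
    by (rule periodic_representative[where h=v and n=N]) (use assms in \<open>auto simp: per_def\<close>)
  then have "i' = 1 + int (nat (i' - 1))" "nat (i' - 1) < N" by auto
  then show ?thesis using zero i' by metis
qed

text \<open>Testing the weak equation with the defect v of this relation and summing by parts gives
  that the sum of v^2 over a period vanishes.\<close>
lemma weak_sol_flux_step:
  assumes "0 < N" "per N a" "per N f" and sol: "weak_sol N a f u"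
  shows "a (i + 1) * Dd (1 / real N) u (i + 1) = a i * Dd (1 / real N) u i - f (i + 1) / real N"
proof -
  define \<sigma> where "\<sigma> i = a i * Dd (1 / real N) u i" for i
  define v where "v k = \<sigma> (k - 1) - \<sigma> k - f k / real N" for k
  have "per N (Dd (1 / real N) u)" using sol by (simp add: weak_sol_def per_Dd)
  with \<open>per N a\<close> have per_\<sigma>: "per N \<sigma>" by (simp add: per_def \<sigma>_def)
  then have per_v: "per N v"
    using \<open>per N f\<close> unfolding v_def per_def by (metis add.commute add.left_commute add_diff_eq)
  have "(\<Sum>k<N. \<sigma> (1 + int k) * (v (2 + int k) - v (1 + int k)))
      = (\<Sum>k<N. f (1 + int k) * v (1 + int k)) / real N"
  proof -
    have "ipX N \<sigma> (Dd (1 / real N) v) = ipX N f v"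
      using sol per_v unfolding weak_sol_def by (simp add: \<sigma>_def[abs_def])
    then have "(\<Sum>k<N. \<sigma> (1 + int k) * ((v (2 + int k) - v (1 + int k)) * real N)) / real N
        = (\<Sum>k<N. f (1 + int k) * v (1 + int k)) / real N"
      by (simp add: ipX_def avgX_def sum_atLeastAtMost_1_int Dd_def add_ac)
    moreover have "(\<Sum>k<N. \<sigma> (1 + int k) * ((v (2 + int k) - v (1 + int k)) * real N))
        = real N * (\<Sum>k<N. \<sigma> (1 + int k) * (v (2 + int k) - v (1 + int k)))"
      by (simp add: sum_distrib_left algebra_simps)
    ultimately show ?thesis using \<open>0 < N\<close> by simp
  qed
  then have "(\<Sum>k<N. (\<sigma> (int k) - \<sigma> (1 + int k) - f (1 + int k) / real N) * v (1 + int k)) = 0"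
    unfolding summation_by_parts_periodic[OF per_\<sigma> per_v]
    by (simp add: algebra_simps sum_subtractf sum_divide_distrib sum.distrib)
  then have "(\<Sum>k<N. v (1 + int k) * v (1 + int k)) = 0" by (simp add: v_def)
  then have "v (1 + int k) = 0" if "k < N" for k
    using that by (subst (asm) sum_nonneg_eq_0_iff) auto
  then have "v (i + 1) = 0" using periodic_eq_0[OF per_v \<open>0 < N\<close>] by blast
  then show ?thesis by (simp add: v_def \<sigma>_def)
qed

lemma Dd_add_scaled:
  assumes "e \<noteq> 0"
  shows "Dd e (\<lambda>i. a i + e * b i - c i) i = Dd e a i + (b (i + 1) - b i) - Dd e c i"
  using assms by (simp add: Dd_def field_simps)

lemma normL2_nonneg: "0 \<le> normL2 N f"
  by (simp add: normL2_def avgX_def sum_nonneg)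

lemma abs_le_normLinf2:
  assumes "per2 N p g" "0 < N" "0 < p"
  shows "\<bar>g i j\<bar> \<le> normLinf2 N p g"
proof -
  obtain i' where i': "i' \<in> {1..int N}" "g i j = g i' j"
    by (rule periodic_representative[where h="\<lambda>i. g i j" and n=N]) (use assms in \<open>auto simp: per2_def\<close>)
  obtain j' where j': "j' \<in> {1..int p}" "g i' j = g i' j'"
    by (rule periodic_representative[where h="g i'" and n=p]) (use assms in \<open>auto simp: per2_def\<close>)
  have "\<bar>g i' j'\<bar> \<le> normLinf2 N p g"
    unfolding normLinf2_def by (rule Max_ge) (use i' j' in force)+
  then show ?thesis using i' j' by simp
qed

lemma sum_abs_div_le_normL2: "(\<Sum>k<N. \<bar>f (1 + int k)\<bar>) / real N \<le> normL2 N f"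
proof -
  have "(\<Sum>k<N. \<bar>f (1 + int k)\<bar>)\<^sup>2 \<le> (\<Sum>k<N. (f (1 + int k))\<^sup>2) * real N"
    using sum_squared_le_sum_of_squares[of "\<lambda>k. \<bar>f (1 + int k)\<bar>" "{..<N}"] by simp
  then have "((\<Sum>k<N. \<bar>f (1 + int k)\<bar>) / real N)\<^sup>2 \<le> (\<Sum>k<N. (f (1 + int k))\<^sup>2) / real N"
    by (cases "N = 0") (simp_all add: power_divide field_simps power2_eq_square)
  then show ?thesis
    by (simp add: normL2_def avgX_def sum_atLeastAtMost_1_int real_le_rsqrt)
qed

lemma normL2_le_of_pointwise:
  fixes f g :: "int \<Rightarrow> real"
  assumes "0 < N" "per N f" and bound: "\<And>i. \<bar>g i\<bar> \<le> a * \<bar>f (i + 1)\<bar> + b * normL2 N f"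
  shows "normL2 N g \<le> sqrt (2 * (a\<^sup>2 + b\<^sup>2)) * normL2 N f"
proof -
  let ?n = "normL2 N f"
  have sq: "(g i)\<^sup>2 \<le> 2 * (a\<^sup>2 * (f (i + 1))\<^sup>2 + b\<^sup>2 * ?n\<^sup>2)" for i
  proof -
    have "(g i)\<^sup>2 \<le> (a * \<bar>f (i + 1)\<bar> + b * ?n)\<^sup>2"
      using bound[of i] by (metis abs_ge_zero order_trans power2_abs power_mono)
    also have "\<dots> \<le> 2 * (a\<^sup>2 * (f (i + 1))\<^sup>2 + b\<^sup>2 * ?n\<^sup>2)"
      using zero_le_power2[of "a * \<bar>f (i + 1)\<bar> - b * ?n"]
      by (simp add: power2_eq_square algebra_simps)
    finally show ?thesis .
  qed
  have "(\<Sum>k<N. (f (1 + 1 + int k))\<^sup>2) = (\<Sum>k<N. (f (1 + int k))\<^sup>2)"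
    by (rule sum_shift_periodic) (use \<open>per N f\<close> in \<open>simp add: per_def\<close>)
  moreover have n2: "?n\<^sup>2 = (\<Sum>k<N. (f (1 + int k))\<^sup>2) / real N"
    by (simp add: normL2_def avgX_def sum_atLeastAtMost_1_int sum_nonneg)
  ultimately have "(\<Sum>k<N. 2 * (a\<^sup>2 * (f (1 + int k + 1))\<^sup>2 + b\<^sup>2 * ?n\<^sup>2)) / real N
      = 2 * (a\<^sup>2 + b\<^sup>2) * ?n\<^sup>2"
    using \<open>0 < N\<close> by (simp add: sum.distrib sum_distrib_left[symmetric] add_ac field_simps)
  moreover have "(\<Sum>k<N. (g (1 + int k))\<^sup>2) / real N
      \<le> (\<Sum>k<N. 2 * (a\<^sup>2 * (f (1 + int k + 1))\<^sup>2 + b\<^sup>2 * ?n\<^sup>2)) / real N"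
    by (intro divide_right_mono sum_mono sq) simp
  ultimately have "avgX N (\<lambda>i. (g i)\<^sup>2) \<le> (sqrt (2 * (a\<^sup>2 + b\<^sup>2)) * ?n)\<^sup>2"
    by (simp add: avgX_def sum_atLeastAtMost_1_int power_mult_distrib)
  moreover have "0 \<le> sqrt (2 * (a\<^sup>2 + b\<^sup>2)) * ?n" by (simp add: normL2_nonneg)
  ultimately show ?thesis unfolding normL2_def[of N g] by (rule real_le_lsqrt[rotated])
qed

section \<open>Cell solution, fluxes and the corrector\<close>

definition cell_bound :: "nat \<Rightarrow> real \<Rightarrow> real \<Rightarrow> real" where
  "cell_bound p c C = real p * (C / c + 1)"

definition cell_lip :: "nat \<Rightarrow> real \<Rightarrow> real \<Rightarrow> real \<Rightarrow> real" where
  "cell_lip p c C C' = real p * (C\<^sup>2 * C' / c ^ 3 + C * C' / c\<^sup>2)"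

definition flux_gap_const :: "nat \<Rightarrow> real \<Rightarrow> real \<Rightarrow> real \<Rightarrow> real" where
  "flux_gap_const p c C C' = C * real p * (2 * C' / c\<^sup>2 + 2 / c)"

definition H1_error_const :: "nat \<Rightarrow> real \<Rightarrow> real \<Rightarrow> real \<Rightarrow> real" where
  "H1_error_const p c C C' = sqrt (2 * ((cell_bound p c C / c)\<^sup>2
     + (cell_bound p c C * C' / c\<^sup>2 + (cell_lip p c C C' + flux_gap_const p c C C') / c)\<^sup>2))"

definition mean_error_const :: "nat \<Rightarrow> real \<Rightarrow> real \<Rightarrow> real \<Rightarrow> real" where
  "mean_error_const p c C C' =
     real p * (cell_lip p c C C' / c + cell_bound p c C * C' / c\<^sup>2 + cell_bound p c C / c)"

locale homogenization =
  fixes N p :: nat and psi chi :: "int \<Rightarrow> int \<Rightarrow> real" and f u u0 :: "int \<Rightarrow> real"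
    and c C C' :: real
  assumes c_pos: "0 < c" and p_pos: "0 < p" and N_pos: "0 < N" and p_dvd_N: "p dvd N"
    and per2_psi: "per2 N p psi" and psi_bounds: "\<And>i j. c \<le> psi i j \<and> psi i j \<le> C"
    and DX_psi: "normLinf2 N p (DX (1 / real N) psi) \<le> C'"
    and cell: "cell_solution N p psi chi" and per_f: "per N f"
    and u_sol: "weak_sol N (oscil psi) f u" and u0_sol: "weak_sol N (psi_hom p psi) f u0"
begin

definition "eps = 1 / real N"

abbreviation "psi0 \<equiv> psi_hom p psi"

lemma eps_pos: "0 < eps"
  using N_pos by (simp add: eps_def)

lemma N_eps: "real N * eps = 1"
  using N_pos by (simp add: eps_def)

lemma psi_ge: "c \<le> psi i j" and psi_le: "psi i j \<le> C"
  using psi_bounds by auto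

lemma psi_pos: "0 < psi i j"
  using psi_ge[of i j] c_pos by linarith

lemma c_le_C: "c \<le> C"
  using psi_ge[of 0 0] psi_le[of 0 0] by linarith

lemma inv_psi_bounds: "1 / C \<le> 1 / psi i j" "1 / psi i j \<le> 1 / c"
  using psi_ge psi_le psi_pos c_pos by (simp_all add: frac_le)

lemma psi_perX: "psi (i + int N) j = psi i j"
  using per2_psi by (simp add: per2_def)

lemma psi_perY: "psi i (j + int p) = psi i j"
  using per2_psi by (simp add: per2_def)

lemma per_oscil: "per N (oscil psi)"
proof -
  obtain q where "N = q * p" using p_dvd_N by (metis dvd_def mult.commute)
  then have "psi i (j + int N) = psi i j" for i j
    using periodic_add_mult[where h="psi i", OF psi_perY, of j "int q"] by simp
  then show ?thesis by (simp add: per_def oscil_def psi_perX)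
qed

lemma per_psi0: "per N psi0"
  by (simp add: per_def psi_hom_def avgY_def psi_perX)

lemma inv_psi0: "1 / psi0 i = (\<Sum>r<p. 1 / psi i (1 + int r)) / real p"
  by (simp add: psi_hom_def avgY_def sum_atLeastAtMost_1_int)

lemma inv_psi0_bounds: "1 / C \<le> 1 / psi0 i" "1 / psi0 i \<le> 1 / c"
proof -
  have "(\<Sum>r<p. 1 / C) \<le> (\<Sum>r<p. 1 / psi i (1 + int r))"
    by (intro sum_mono inv_psi_bounds)
  then show "1 / C \<le> 1 / psi0 i" using p_pos by (simp add: inv_psi0 field_simps)
  have "(\<Sum>r<p. 1 / psi i (1 + int r)) \<le> (\<Sum>r<p. 1 / c)"
    by (intro sum_mono inv_psi_bounds)
  then show "1 / psi0 i \<le> 1 / c" using p_pos by (simp add: inv_psi0 field_simps)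
qed

lemma psi0_pos: "0 < psi0 i"
  using inv_psi0_bounds(1)[of i] c_pos c_le_C
  by (metis less_le_trans zero_less_divide_1_iff zero_less_one order_less_le_trans)

lemma psi0_le: "psi0 i \<le> C"
  using inv_psi0_bounds(1)[of i] psi0_pos[of i] c_pos c_le_C by (simp add: field_simps)

lemma psi_step: "\<bar>psi (i + 1) j - psi i j\<bar> \<le> eps * C'"
proof -
  have "psi (i + int N + 1) j = psi (i + 1) j" for i j
    using psi_perX[of "i + 1" j] by (simp add: add_ac)
  then have "per2 N p (DX (1 / real N) psi)"
    by (simp add: per2_def DX_def psi_perX psi_perY)
  then have "\<bar>DX (1 / real N) psi i j\<bar> \<le> C'"
    using abs_le_normLinf2 N_pos p_pos DX_psi by (meson order_trans)
  then have "real N * \<bar>psi (i + 1) j - psi i j\<bar> \<le> C'"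
    by (simp add: DX_def abs_mult mult.commute)
  then show ?thesis using N_pos by (simp add: eps_def field_simps)
qed

lemma C'_nonneg: "0 \<le> C'"
  using psi_step[of 0 0] eps_pos by (smt (verit) mult_pos_neg)

lemma inv_psi_step: "\<bar>1 / psi (i + 1) j - 1 / psi i j\<bar> \<le> eps * C' / c\<^sup>2"
proof -
  have "c\<^sup>2 \<le> psi (i + 1) j * psi i j"
    unfolding power2_eq_square using psi_ge c_pos by (intro mult_mono) (auto simp: less_imp_le[OF psi_pos])
  then have "\<bar>psi i j - psi (i + 1) j\<bar> / (psi (i + 1) j * psi i j) \<le> eps * C' / c\<^sup>2"
    using psi_step[of i j] c_pos eps_pos C'_nonneg
    by (intro frac_le) (auto simp: abs_minus_commute)
  moreover have "1 / psi (i + 1) j - 1 / psi i j = (psi i j - psi (i + 1) j) / (psi (i + 1) j * psi i j)"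
    using psi_pos[of "i + 1" j] psi_pos[of i j] by (simp add: field_simps)
  ultimately show ?thesis using psi_pos[of "i + 1" j] psi_pos[of i j] by (simp add: abs_mult)
qed

lemma inv_psi0_step: "\<bar>1 / psi0 (i + 1) - 1 / psi0 i\<bar> \<le> eps * C' / c\<^sup>2"
proof -
  have "\<bar>1 / psi0 (i + 1) - 1 / psi0 i\<bar>
      \<le> (\<Sum>r<p. \<bar>1 / psi (i + 1) (1 + int r) - 1 / psi i (1 + int r)\<bar>) / real p"
    unfolding inv_psi0 diff_divide_distrib[symmetric] sum_subtractf[symmetric]
    using p_pos by (simp add: divide_right_mono sum_abs)
  also have "\<dots> \<le> (\<Sum>r<p. eps * C' / c\<^sup>2) / real p"
    by (intro divide_right_mono sum_mono inv_psi_step) simp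
  finally show ?thesis using p_pos by simp
qed

lemma psi0_step: "\<bar>psi0 (i + 1) - psi0 i\<bar> \<le> C\<^sup>2 * (eps * C' / c\<^sup>2)"
proof -
  have "psi0 (i + 1) - psi0 i = psi0 (i + 1) * psi0 i * (1 / psi0 i - 1 / psi0 (i + 1))"
    using psi0_pos[of i] psi0_pos[of "i + 1"] by (simp add: field_simps)
  then have "\<bar>psi0 (i + 1) - psi0 i\<bar> = psi0 (i + 1) * psi0 i * \<bar>1 / psi0 (i + 1) - 1 / psi0 i\<bar>"
    using psi0_pos[of i] psi0_pos[of "i + 1"] by (simp add: abs_mult abs_minus_commute)
  also have "\<dots> \<le> (C * C) * (eps * C' / c\<^sup>2)"
    using psi0_le psi0_pos inv_psi0_step[of i] c_le_C c_pos
    by (intro mult_mono) (auto intro: mult_mono less_imp_le)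
  finally show ?thesis by (simp add: power2_eq_square)
qed

lemma chi_perY: "chi i (j + int p) = chi i j"
  using cell by (simp add: cell_solution_def per2_def)

lemma chi_zero_sum: "(\<Sum>r<p. chi i (1 + int r)) = 0"
  using cell p_pos by (simp add: cell_solution_def avgY_def sum_atLeastAtMost_1_int)

text \<open>The cell equation says that the cell flux psi (1 + D_Y chi) is constant in j; since
  D_Y chi has zero mean over a period, that constant is the harmonic mean psi0.\<close>
lemma chi_stepY: "chi i (j + 1) - chi i j = psi0 i / psi i j - 1"
proof -
  define T where "T j = psi i j * (1 + DY chi i j)" for j
  have T_step: "T (j + 1) = T j" for j
  proof -
    have "- DY (\<lambda>i' j'. psi i' j' * DY chi i' j') i j = DY psi i j"
      using cell unfolding cell_solution_def by blast
    then show ?thesis by (simp add: T_def DY_def algebra_simps)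
  qed
  have T_const: "T j = T 1" for j
  proof (induction j rule: int_induct[where k=1])
    case (step1 j) then show ?case using T_step[of j] by simp
  next
    case (step2 j) then show ?case using T_step[of "j - 1"] by simp
  qed simp
  have DY_eq: "1 + DY chi i j = T 1 / psi i j" for j
    using T_const[of j] psi_pos[of i j] by (simp add: T_def field_simps)
  have "(\<Sum>r<p. DY chi i (1 + int r)) = chi i (1 + int p) - chi i 1"
    using sum_lessThan_telescope[of "\<lambda>r. chi i (1 + int r)" p] by (simp add: DY_def add_ac)
  then have "(\<Sum>r<p. DY chi i (1 + int r)) = 0"
    using chi_perY[of i 1] by (simp add: add.commute)
  then have "real p = (\<Sum>r<p. 1 + DY chi i (1 + int r))" by (simp add: sum.distrib)
  also have "\<dots> = T 1 * (\<Sum>r<p. 1 / psi i (1 + int r))" by (simp add: DY_eq sum_distrib_left)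
  finally have "real p = T 1 * (\<Sum>r<p. 1 / psi i (1 + int r))" .
  moreover have "(\<Sum>r<p. 1 / psi i (1 + int r)) = real p / psi0 i"
    using inv_psi0[of i] p_pos psi0_pos[of i] by (simp add: field_simps)
  ultimately have "T 1 = psi0 i"
    using p_pos psi0_pos[of i] by (simp add: field_simps)
  then show ?thesis using DY_eq[of j] by (simp add: DY_def)
qed

lemma cell_bound_nonneg: "0 \<le> cell_bound p c C"
  using c_pos c_le_C by (simp add: cell_bound_def)

lemma cell_lip_nonneg: "0 \<le> cell_lip p c C C'"
  using c_pos c_le_C C'_nonneg by (simp add: cell_lip_def)

lemma chi_bound: "\<bar>chi i j\<bar> \<le> cell_bound p c C"
proof -
  have "\<bar>chi i (j + 1) - chi i j\<bar> \<le> C / c + 1" for j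
  proof -
    have "0 \<le> psi0 i / psi i j" using psi0_pos psi_pos by (simp add: less_imp_le)
    moreover have "psi0 i / psi i j \<le> C / c"
      using psi0_le[of i] psi_ge[of i j] psi0_pos[of i] c_pos by (intro frac_le) auto
    ultimately show ?thesis unfolding chi_stepY by linarith
  qed
  then show ?thesis unfolding cell_bound_def
    by (rule periodic_zero_sum_abs_le[where h="chi i", OF p_pos chi_perY chi_zero_sum])
qed

lemma chi_stepY_stepX:
  "\<bar>(chi (i + 1) (j + 1) - chi (i + 1) j) - (chi i (j + 1) - chi i j)\<bar>
     \<le> eps * (C\<^sup>2 * C' / c ^ 3 + C * C' / c\<^sup>2)"
proof -
  have "(chi (i + 1) (j + 1) - chi (i + 1) j) - (chi i (j + 1) - chi i j)
    = psi0 (i + 1) / psi (i + 1) j - psi0 i / psi i j"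
    by (simp add: chi_stepY)
  also have "\<dots> = (psi0 (i + 1) - psi0 i) * (1 / psi (i + 1) j) + psi0 i * (1 / psi (i + 1) j - 1 / psi i j)"
    using psi_pos[of "i + 1" j] psi_pos[of i j] by (simp add: field_simps)
  finally have split: "(chi (i + 1) (j + 1) - chi (i + 1) j) - (chi i (j + 1) - chi i j) = \<dots>" .
  have a: "\<bar>(psi0 (i + 1) - psi0 i) * (1 / psi (i + 1) j)\<bar> \<le> (C\<^sup>2 * (eps * C' / c\<^sup>2)) * (1 / c)"
    unfolding abs_mult using psi0_step[of i] inv_psi_bounds[of "i + 1" j] psi_pos[of "i + 1" j]
    by (intro mult_mono) auto
  have b: "\<bar>psi0 i * (1 / psi (i + 1) j - 1 / psi i j)\<bar> \<le> C * (eps * C' / c\<^sup>2)"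
    unfolding abs_mult using psi0_le[of i] psi0_pos[of i] inv_psi_step[of i j] c_pos c_le_C
    by (intro mult_mono) auto
  have "\<bar>(psi0 (i + 1) - psi0 i) * (1 / psi (i + 1) j) + psi0 i * (1 / psi (i + 1) j - 1 / psi i j)\<bar>
      \<le> (C\<^sup>2 * (eps * C' / c\<^sup>2)) * (1 / c) + C * (eps * C' / c\<^sup>2)"
    using a b by (rule order_trans[OF abs_triangle_ineq add_mono])
  also have "\<dots> = eps * (C\<^sup>2 * C' / c ^ 3 + C * C' / c\<^sup>2)"
    using c_pos by (simp add: field_simps power2_eq_square power3_eq_cube)
  finally show ?thesis unfolding split .
qed

lemma chi_stepX: "\<bar>chi (i + 1) j - chi i j\<bar> \<le> eps * cell_lip p c C C'"
proof -
  have "(\<Sum>r<p. chi (i + 1) (1 + int r) - chi i (1 + int r)) = 0"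
    by (simp add: sum_subtractf chi_zero_sum)
  with chi_stepY_stepX[of i]
  have "\<bar>(\<lambda>j. chi (i + 1) j - chi i j) j\<bar> \<le> real p * (eps * (C\<^sup>2 * C' / c ^ 3 + C * C' / c\<^sup>2))"
    by (intro periodic_zero_sum_abs_le[OF p_pos]) (auto simp: chi_perY algebra_simps)
  then show ?thesis by (simp add: cell_lip_def algebra_simps)
qed

definition "flux i = psi i i * Dd eps u i"
definition "flux0 i = psi0 i * Dd eps u0 i"
definition "flux_gap = flux 0 - flux0 0"

lemma flux_step: "flux (i + 1) = flux i - f (i + 1) / real N"
  using weak_sol_flux_step[OF N_pos per_oscil per_f u_sol, of i]
  by (simp add: flux_def oscil_def eps_def)

lemma flux0_step: "flux0 (i + 1) = flux0 i - f (i + 1) / real N"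
  using weak_sol_flux_step[OF N_pos per_psi0 per_f u0_sol, of i]
  by (simp add: flux0_def eps_def)

lemma flux_eq: "flux i = flux0 i + flux_gap"
proof (induction i rule: int_induct[where k=0])
  case (step1 i) then show ?case using flux_step[of i] flux0_step[of i] by simp
next
  case (step2 i) then show ?case using flux_step[of "i - 1"] flux0_step[of "i - 1"] by simp
qed (simp add: flux_gap_def)

lemma Du_eq: "Dd eps u i = (flux0 i + flux_gap) / psi i i"
  using psi_pos[of i i] by (simp add: flux_def flip: flux_eq)

lemma Du0_eq: "Dd eps u0 i = flux0 i / psi0 i"
  using psi0_pos[of i] by (simp add: flux0_def)

lemma flux0_step_abs: "\<bar>flux0 (i + 1) - flux0 i\<bar> = eps * \<bar>f (i + 1)\<bar>"
  using flux0_step[of i] N_pos by (simp add: eps_def)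

lemma flux0_variation: "(\<Sum>k<N. \<bar>flux0 (a + int k + 1) - flux0 (a + int k)\<bar>) \<le> normL2 N f"
proof -
  have "(\<Sum>k<N. \<bar>f (a + 1 + int k)\<bar>) = (\<Sum>k<N. \<bar>f (1 + int k)\<bar>)"
    by (rule sum_shift_periodic) (use per_f in \<open>simp add: per_def\<close>)
  moreover have "\<bar>flux0 (a + int k + 1) - flux0 (a + int k)\<bar> = \<bar>f (a + 1 + int k)\<bar> / real N" for k
    using flux0_step_abs[of "a + int k"] by (simp add: eps_def add_ac)
  ultimately have "(\<Sum>k<N. \<bar>flux0 (a + int k + 1) - flux0 (a + int k)\<bar>) = (\<Sum>k<N. \<bar>f (1 + int k)\<bar>) / real N"
    by (simp flip: sum_divide_distrib)
  then show ?thesis using sum_abs_div_le_normL2[of f N] by simp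
qed

text \<open>flux0/psi0 = Du0 sums to zero over a period, so zero is a positively weighted mean of
  flux0 and |flux0| is at most its variation over a period.\<close>
lemma flux0_bound: "\<bar>flux0 i\<bar> \<le> normL2 N f"
proof -
  have "(\<Sum>r<N. 1 / psi0 (i + int r) * flux0 (i + int r)) = 0"
    using sum_Dd_periodic[of N u0 eps i] u0_sol by (simp add: weak_sol_def Du0_eq)
  moreover have "\<bar>flux0 (i + int r) - flux0 (i + int 0)\<bar> \<le> normL2 N f" if "r < N" for r
  proof -
    have "\<bar>flux0 (i + int r) - flux0 i\<bar> \<le> (\<Sum>k<r. \<bar>flux0 (i + int k + 1) - flux0 (i + int k)\<bar>)"
      by (rule abs_diff_le_sum_steps)
    also have "\<dots> \<le> (\<Sum>k<N. \<bar>flux0 (i + int k + 1) - flux0 (i + int k)\<bar>)"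
      using that by (intro sum_mono2) auto
    finally show ?thesis using flux0_variation[of i] by simp
  qed
  ultimately show ?thesis
    using abs_le_of_weighted_sum_eq_0[of N "\<lambda>r. 1 / psi0 (i + int r)" "\<lambda>r. flux0 (i + int r)"]
      N_pos psi0_pos by simp
qed

lemma oscillating_sum_flux0:
  fixes w :: "int \<Rightarrow> int \<Rightarrow> real"
  assumes "\<And>i j. w i (j + int p) = w i j" "\<And>i. (\<Sum>r<p. w i (1 + int r)) = 0"
    and w_bound: "\<And>i j. \<bar>w i j\<bar> \<le> W" and "\<And>i j. \<bar>w (i + 1) j - w i j\<bar> \<le> eps * L"
  shows "\<bar>\<Sum>k<N. flux0 (1 + int k) * w (1 + int k) (1 + int k)\<bar> \<le> real p * (L + W) * normL2 N f"
proof -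
  obtain q where "N = q * p" using p_dvd_N by (metis dvd_def mult.commute)
  have "\<bar>\<Sum>k<N. flux0 (1 + int k) * w (1 + int k) (1 + int k)\<bar>
      \<le> real N * real p * normL2 N f * (eps * L)
        + real p * W * (\<Sum>k<N. \<bar>flux0 (int k + 2) - flux0 (int k + 1)\<bar>)"
    by (rule oscillating_sum[where s=flux0 and w=w, OF \<open>N = q * p\<close> assms flux0_bound])
  also have "real N * real p * normL2 N f * (eps * L) = real p * L * normL2 N f"
    using N_eps by (simp add: algebra_simps)
  also have "real p * W * (\<Sum>k<N. \<bar>flux0 (int k + 2) - flux0 (int k + 1)\<bar>) \<le> real p * W * normL2 N f"
    using flux0_variation[of 1] w_bound[of 0 0] by (intro mult_left_mono) (simp_all add: add_ac)
  finally show ?thesis by (simp add: algebra_simps)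
qed

lemma flux0_inv_psi_sum_bound:
  "\<bar>\<Sum>k<N. flux0 (1 + int k) * (1 / psi (1 + int k) (1 + int k) - 1 / psi0 (1 + int k))\<bar>
     \<le> real p * (2 * C' / c\<^sup>2 + 2 / c) * normL2 N f"
proof (rule oscillating_sum_flux0[where w="\<lambda>i j. 1 / psi i j - 1 / psi0 i"])
  show "\<bar>(1 / psi i j - 1 / psi0 i)\<bar> \<le> 2 / c" for i j
  proof -
    have "0 < 1 / C" "2 / c = 1 / c + 1 / c" using c_pos c_le_C by simp_all
    then show ?thesis
      using inv_psi_bounds[of i j] inv_psi0_bounds[of i] unfolding abs_le_iff by linarith
  qed
  show "\<bar>(1 / psi (i + 1) j - 1 / psi0 (i + 1)) - (1 / psi i j - 1 / psi0 i)\<bar> \<le> eps * (2 * C' / c\<^sup>2)"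
    for i j
  proof -
    have "eps * (2 * C' / c\<^sup>2) = eps * C' / c\<^sup>2 + eps * C' / c\<^sup>2" by simp
    then show ?thesis using inv_psi_step[of i j] inv_psi0_step[of i] unfolding abs_le_iff by linarith
  qed
qed (use p_pos in \<open>simp_all add: psi_perY sum_subtractf inv_psi0\<close>)

text \<open>Du and Du0 both sum to zero over a period; subtracting the two identities expresses the
  flux gap through the oscillating sum above.\<close>
lemma flux_gap_bound: "\<bar>flux_gap\<bar> \<le> eps * flux_gap_const p c C C' * normL2 N f"
proof -
  define P where "P = (\<Sum>k<N. 1 / psi (1 + int k) (1 + int k))"
  define S where "S = (\<Sum>k<N. flux0 (1 + int k) * (1 / psi (1 + int k) (1 + int k) - 1 / psi0 (1 + int k)))"
  have "(\<Sum>k<N. (flux0 (1 + int k) + flux_gap) / psi (1 + int k) (1 + int k)) = 0"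
    using sum_Dd_periodic[of N u eps 1] u_sol by (simp add: weak_sol_def Du_eq)
  moreover have "(\<Sum>k<N. flux0 (1 + int k) / psi0 (1 + int k)) = 0"
    using sum_Dd_periodic[of N u0 eps 1] u0_sol by (simp add: weak_sol_def Du0_eq)
  moreover have "(\<Sum>k<N. (flux0 (1 + int k) + flux_gap) / psi (1 + int k) (1 + int k))
      = (\<Sum>k<N. flux0 (1 + int k) / psi (1 + int k) (1 + int k)) + flux_gap * P"
    by (simp add: P_def add_divide_distrib sum.distrib sum_distrib_left)
  moreover have "S = (\<Sum>k<N. flux0 (1 + int k) / psi (1 + int k) (1 + int k))
      - (\<Sum>k<N. flux0 (1 + int k) / psi0 (1 + int k))"
    by (simp add: S_def right_diff_distrib sum_subtractf)
  ultimately have gap: "flux_gap * P = - S" by linarith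
  have P_ge: "real N / C \<le> P"
  proof -
    have "(\<Sum>k<N. 1 / C) \<le> P" unfolding P_def by (intro sum_mono inv_psi_bounds)
    then show ?thesis by simp
  qed
  have "0 < real N / C" using N_pos c_pos c_le_C by simp
  have "\<bar>flux_gap\<bar> * (real N / C) \<le> \<bar>flux_gap\<bar> * P"
    by (rule mult_left_mono[OF P_ge abs_ge_zero])
  also have "\<dots> = \<bar>S\<bar>"
    using gap P_ge \<open>0 < real N / C\<close> by (metis abs_minus_cancel abs_mult abs_of_pos less_le_trans)
  also have "\<dots> \<le> real p * (2 * C' / c\<^sup>2 + 2 / c) * normL2 N f"
    unfolding S_def by (rule flux0_inv_psi_sum_bound)
  finally show ?thesis
    using N_pos c_pos c_le_C by (simp add: eps_def flux_gap_const_def field_simps)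
qed

lemma Du0_bound: "\<bar>Dd eps u0 i\<bar> \<le> normL2 N f / c"
proof -
  have "\<bar>Dd eps u0 i\<bar> = \<bar>flux0 i\<bar> * (1 / psi0 i)"
    using psi0_pos[of i] by (simp add: Du0_eq abs_mult)
  also have "\<dots> \<le> normL2 N f * (1 / c)"
    using flux0_bound inv_psi0_bounds(2) psi0_pos[of i] by (intro mult_mono) (auto simp: normL2_nonneg)
  finally show ?thesis by simp
qed

lemma Du0_step: "\<bar>Dd eps u0 (i + 1) - Dd eps u0 i\<bar> \<le> eps * (\<bar>f (i + 1)\<bar> / c + C' / c\<^sup>2 * normL2 N f)"
proof -
  have "Dd eps u0 (i + 1) - Dd eps u0 i
      = (flux0 (i + 1) - flux0 i) * (1 / psi0 (i + 1)) + flux0 i * (1 / psi0 (i + 1) - 1 / psi0 i)"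
    by (simp add: Du0_eq algebra_simps)
  also have "\<bar>\<dots>\<bar> \<le> eps * \<bar>f (i + 1)\<bar> * (1 / c) + normL2 N f * (eps * C' / c\<^sup>2)"
  proof (rule order_trans[OF abs_triangle_ineq add_mono])
    show "\<bar>(flux0 (i + 1) - flux0 i) * (1 / psi0 (i + 1))\<bar> \<le> eps * \<bar>f (i + 1)\<bar> * (1 / c)"
      unfolding abs_mult flux0_step_abs using inv_psi0_bounds(2) psi0_pos[of "i + 1"] eps_pos
      by (intro mult_left_mono) auto
    show "\<bar>flux0 i * (1 / psi0 (i + 1) - 1 / psi0 i)\<bar> \<le> normL2 N f * (eps * C' / c\<^sup>2)"
      unfolding abs_mult using flux0_bound inv_psi0_step by (intro mult_mono) (auto simp: normL2_nonneg)
  qed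
  finally show ?thesis by (simp add: algebra_simps)
qed

text \<open>By the cell equation Du = Du0 (1 + D_Y chi) + flux_gap / psi, so the order-one terms
  of D(u^c - u) cancel and only slow variations and the flux gap remain.\<close>
lemma Dd_corrector_error:
  "Dd eps (\<lambda>i. corrector N chi u0 i - u i) i
     = chi (i + 1) (i + 1) * (Dd eps u0 (i + 1) - Dd eps u0 i)
       + (chi (i + 1) (i + 1) - chi i (i + 1)) * Dd eps u0 i - flux_gap / psi i i"
proof -
  have ratio: "psi0 i / psi i i = 1 + chi i (i + 1) - chi i i"
    using chi_stepY[of i i] by simp
  have Du: "Dd eps u i = Dd eps u0 i * (1 + chi i (i + 1) - chi i i) + flux_gap / psi i i"
    unfolding ratio[symmetric] using psi_pos[of i i] psi0_pos[of i] by (simp add: Du_eq Du0_eq field_simps)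
  have "(\<lambda>i. corrector N chi u0 i - u i) = (\<lambda>i. u0 i + eps * (chi i i * Dd eps u0 i) - u i)"
    by (simp add: corrector_def eps_def mult.assoc)
  then have "Dd eps (\<lambda>i. corrector N chi u0 i - u i) i
      = Dd eps u0 i + (chi (i + 1) (i + 1) * Dd eps u0 (i + 1) - chi i i * Dd eps u0 i) - Dd eps u i"
    using Dd_add_scaled[of eps u0 "\<lambda>i. chi i i * Dd eps u0 i" u i] eps_pos by simp
  then show ?thesis unfolding Du by (simp add: algebra_simps)
qed

lemma Dd_corrector_error_bound:
  "\<bar>Dd eps (\<lambda>i. corrector N chi u0 i - u i) i\<bar>
     \<le> eps * (cell_bound p c C / c) * \<bar>f (i + 1)\<bar>
       + eps * (cell_bound p c C * C' / c\<^sup>2 + (cell_lip p c C C' + flux_gap_const p c C C') / c)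
         * normL2 N f"
proof -
  let ?n = "normL2 N f"
  have t1: "\<bar>chi (i + 1) (i + 1) * (Dd eps u0 (i + 1) - Dd eps u0 i)\<bar>
      \<le> cell_bound p c C * (eps * (\<bar>f (i + 1)\<bar> / c + C' / c\<^sup>2 * ?n))"
    unfolding abs_mult using chi_bound Du0_step cell_bound_nonneg by (intro mult_mono) auto
  have t2: "\<bar>(chi (i + 1) (i + 1) - chi i (i + 1)) * Dd eps u0 i\<bar> \<le> (eps * cell_lip p c C C') * (?n / c)"
    unfolding abs_mult using chi_stepX Du0_bound eps_pos cell_lip_nonneg by (intro mult_mono) auto
  have t3: "\<bar>flux_gap / psi i i\<bar> \<le> (eps * flux_gap_const p c C C' * ?n) * (1 / c)"
    using flux_gap_bound inv_psi_bounds(2)[of i i] psi_pos[of i i]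
    by (simp add: abs_mult divide_inverse mult_mono)
  have "\<bar>Dd eps (\<lambda>i. corrector N chi u0 i - u i) i\<bar>
      \<le> \<bar>chi (i + 1) (i + 1) * (Dd eps u0 (i + 1) - Dd eps u0 i)\<bar>
        + \<bar>(chi (i + 1) (i + 1) - chi i (i + 1)) * Dd eps u0 i\<bar> + \<bar>flux_gap / psi i i\<bar>"
    unfolding Dd_corrector_error by (rule order_trans[OF abs_triangle_ineq4 add_right_mono[OF abs_triangle_ineq]])
  also have "\<dots> \<le> cell_bound p c C * (eps * (\<bar>f (i + 1)\<bar> / c + C' / c\<^sup>2 * ?n))
      + (eps * cell_lip p c C C') * (?n / c) + (eps * flux_gap_const p c C C' * ?n) * (1 / c)"
    using t1 t2 t3 by linarith
  also have "\<dots> = eps * (cell_bound p c C / c) * \<bar>f (i + 1)\<bar>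
       + eps * (cell_bound p c C * C' / c\<^sup>2 + (cell_lip p c C C' + flux_gap_const p c C C') / c) * ?n"
    by (simp add: algebra_simps add_divide_distrib)
  finally show ?thesis .
qed

theorem corrector_H1_error:
  "semiH1 N (1 / real N) (\<lambda>i. corrector N chi u0 i - u i) \<le> (1 / real N) * H1_error_const p c C C' * normL2 N f"
proof -
  let ?a = "cell_bound p c C / c"
  let ?b = "cell_bound p c C * C' / c\<^sup>2 + (cell_lip p c C C' + flux_gap_const p c C C') / c"
  have "normL2 N (Dd eps (\<lambda>i. corrector N chi u0 i - u i))
      \<le> sqrt (2 * ((eps * ?a)\<^sup>2 + (eps * ?b)\<^sup>2)) * normL2 N f"
    by (rule normL2_le_of_pointwise[OF N_pos per_f]) (use Dd_corrector_error_bound in simp)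
  also have "2 * ((eps * ?a)\<^sup>2 + (eps * ?b)\<^sup>2) = eps\<^sup>2 * (2 * (?a\<^sup>2 + ?b\<^sup>2))"
    unfolding power_mult_distrib by (simp only: distrib_left mult.left_commute)
  also have "sqrt (eps\<^sup>2 * (2 * (?a\<^sup>2 + ?b\<^sup>2))) = eps * sqrt (2 * (?a\<^sup>2 + ?b\<^sup>2))"
    using eps_pos by (simp add: real_sqrt_mult)
  finally show ?thesis by (simp add: semiH1_def H1_error_const_def eps_def)
qed

lemma flux0_chi_sum_bound:
  "\<bar>\<Sum>k<N. flux0 (1 + int k) * (chi (1 + int k) (1 + int k) / psi0 (1 + int k))\<bar>
     \<le> mean_error_const p c C C' * normL2 N f"
  unfolding mean_error_const_def
proof (rule oscillating_sum_flux0[where w="\<lambda>i j. chi i j / psi0 i"])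
  show "\<bar>chi i j / psi0 i\<bar> \<le> cell_bound p c C / c" for i j
  proof -
    have "\<bar>chi i j / psi0 i\<bar> = \<bar>chi i j\<bar> * (1 / psi0 i)" using psi0_pos[of i] by (simp add: abs_divide)
    also have "\<dots> \<le> cell_bound p c C * (1 / c)"
      using chi_bound inv_psi0_bounds(2) psi0_pos[of i] cell_bound_nonneg by (intro mult_mono) auto
    finally show ?thesis by simp
  qed
  show "\<bar>chi (i + 1) j / psi0 (i + 1) - chi i j / psi0 i\<bar>
      \<le> eps * (cell_lip p c C C' / c + cell_bound p c C * C' / c\<^sup>2)" for i j
  proof -
    have "chi (i + 1) j / psi0 (i + 1) - chi i j / psi0 i
        = (chi (i + 1) j - chi i j) * (1 / psi0 (i + 1)) + chi i j * (1 / psi0 (i + 1) - 1 / psi0 i)"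
      by (simp add: algebra_simps)
    also have "\<bar>\<dots>\<bar> \<le> (eps * cell_lip p c C C') * (1 / c) + cell_bound p c C * (eps * C' / c\<^sup>2)"
    proof (rule order_trans[OF abs_triangle_ineq add_mono])
      show "\<bar>(chi (i + 1) j - chi i j) * (1 / psi0 (i + 1))\<bar> \<le> (eps * cell_lip p c C C') * (1 / c)"
        unfolding abs_mult using chi_stepX inv_psi0_bounds(2) psi0_pos[of "i + 1"] eps_pos cell_lip_nonneg
        by (intro mult_mono) auto
      show "\<bar>chi i j * (1 / psi0 (i + 1) - 1 / psi0 i)\<bar> \<le> cell_bound p c C * (eps * C' / c\<^sup>2)"
        unfolding abs_mult using chi_bound inv_psi0_step cell_bound_nonneg by (intro mult_mono) auto
    qed
    finally show ?thesis by (simp add: algebra_simps)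
  qed
qed (simp_all add: chi_perY chi_zero_sum flip: sum_divide_distrib)

text \<open>The mean of u0 vanishes, so the mean of the corrector is eps^2 times an oscillating sum
  of flux0 against chi/psi0.\<close>
theorem corrector_mean_error:
  "\<bar>avgX N (corrector N chi u0)\<bar> \<le> (1 / real N)\<^sup>2 * mean_error_const p c C C' * normL2 N f"
proof -
  have "(\<Sum>k<N. u0 (1 + int k)) = 0"
    using u0_sol N_pos by (simp add: weak_sol_def avgX_def sum_atLeastAtMost_1_int)
  then have "avgX N (corrector N chi u0) = eps\<^sup>2 * (\<Sum>k<N. chi (1 + int k) (1 + int k) * Dd eps u0 (1 + int k))"
    by (simp add: avgX_def corrector_def sum_atLeastAtMost_1_int sum.distrib eps_def
        sum_distrib_left power2_eq_square mult_ac)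
  also have "\<dots> = eps\<^sup>2 * (\<Sum>k<N. flux0 (1 + int k) * (chi (1 + int k) (1 + int k) / psi0 (1 + int k)))"
    by (simp add: Du0_eq mult.commute)
  finally have "\<bar>avgX N (corrector N chi u0)\<bar>
      = eps\<^sup>2 * \<bar>\<Sum>k<N. flux0 (1 + int k) * (chi (1 + int k) (1 + int k) / psi0 (1 + int k))\<bar>"
    by (simp add: abs_mult)
  also have "\<dots> \<le> eps\<^sup>2 * (mean_error_const p c C C' * normL2 N f)"
    by (rule mult_left_mono[OF flux0_chi_sum_bound]) simp
  finally show ?thesis by (simp add: eps_def mult.assoc)
qed

end

theorem theorem4p5:
  fixes c_psi C_psi C'_psi :: real and p :: nat
  assumes "0 < c_psi" and "0 < p"
  shows "\<exists>C1 C2 :: real. \<forall>(N :: nat) psi chi f u u0.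
     0 < N \<and> p dvd N \<and> per2 N p psi
     \<and> (\<forall>i j. c_psi \<le> psi i j \<and> psi i j \<le> C_psi)
     \<and> normLinf2 N p (DX (1 / real N) psi) \<le> C'_psi
     \<and> cell_solution N p psi chi
     \<and> per N f \<and> avgX N f = 0
     \<and> weak_sol N (oscil psi) f u
     \<and> weak_sol N (psi_hom p psi) f u0
     \<longrightarrow> semiH1 N (1 / real N) (\<lambda>i. corrector N chi u0 i - u i) \<le> (1 / real N) * C1 * normL2 N f
       \<and> \<bar>avgX N (corrector N chi u0)\<bar> \<le> (1 / real N)\<^sup>2 * C2 * normL2 N f"
proof (intro exI allI impI, elim conjE)
  fix N psi chi f u u0
  assume "0 < N" "p dvd N" "per2 N p psi" "\<forall>i j. c_psi \<le> psi i j \<and> psi i j \<le> C_psi"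
    "normLinf2 N p (DX (1 / real N) psi) \<le> C'_psi" "cell_solution N p psi chi" "per N f"
    "weak_sol N (oscil psi) f u" "weak_sol N (psi_hom p psi) f u0"
  then interpret homogenization N p psi chi f u u0 c_psi C_psi C'_psi
    using assms by unfold_locales auto
  show "semiH1 N (1 / real N) (\<lambda>i. corrector N chi u0 i - u i)
      \<le> (1 / real N) * H1_error_const p c_psi C_psi C'_psi * normL2 N f
    \<and> \<bar>avgX N (corrector N chi u0)\<bar> \<le> (1 / real N)\<^sup>2 * mean_error_const p c_psi C_psi C'_psi * normL2 N f"
    using corrector_H1_error corrector_mean_error by simp
qed

end
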